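(* On $\mathbf W$ we have $p^\perp(\mathcal X)\,h^\perp_{D-1}(\mathcal X)=0$, where $p^\perp(\eta)=\eta^{-1}(\eta-\tau)(\eta-\tau^{-1}q^{-D})$ and $h^\perp_{D-1}(\eta)=\eta^{1-D}\prod_{n=1}^{D-1}(\eta-\tau q^n)(\eta-\tau^{-1}q^{-n})$ with $\tau=\sqrt{-1}\,q^{-(D+e)/2}$.
   Context: Dual polar graph setting: $q$ a prime power, $D\ge3$; $\mathbb V$ one of: $2D$-dim. over $\mathbb F_q$ with non-degenerate alternating form ($e=1$); $(2D+1)$-dim. quadratic ($e=1$); $2D$-dim. quadratic of Witt index $D$ ($e=0$); $(2D+2)$-dim. quadratic of Witt index $D$ ($e=2$); $(2D+1)$-dim. Hermitian, $q=r^2$ ($e=3/2$); $2D$-dim. Hermitian, $q=r^2$ ($e=1/2$). $X$ is the set of maximal isotropic subspaces, $\Gamma$ the graph on $X$ with $y\sim z$ iff $\dim(y\cap z)=D-1$, $\partial$ path-length distance, $\Gamma_i(y)=\{z:\partial(y,z)=i\}$. Fix a vertex $x$ and maximal clique $C\ni x$; for $0\le i\le D-1$, $C_i=\{y:\min_{z\in C}\partial(y,z)=i\}$, $C_i^-=\Gamma_i(x)\cap C_i$, $C_i^+=\Gamma_{i+1}(x)\cap C_i$. In $V=\mathbb C^X$, $\hat Y$ is the characteristic vector of $Y$; $\mathbf W=\operatorname{span}\{\hat C_i^\pm\}$ with ordered basis $(\hat C_0^-,\hat C_0^+,\dots,\hat C_{D-1}^-,\hat C_{D-1}^+)$. Define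 $2\times2$ matrices $t(i)=\begin{pmatrix} q^{-e/2}-q^{e/2} & q^{e/2}\\ q^{-e/2}&0\end{pmatrix}$ ($0\le i\le D-1$), $t'(i)=\sqrt{-1}\begin{pmatrix} q^{-D/2}(q^D-q^i+1) & q^{D/2}(q^{i-D}-1)\\ q^{-D/2}(1-q^i) & q^{i-D/2}\end{pmatrix}$ ($1\le i\le D-1$), and $t'(0)=t'(D)=(\sqrt{-1}\,q^{-D/2})$; $\mathfrak t=\operatorname{blockdiag}(t(0),\dots,t(D-1))$, $\mathfrak t'=\operatorname{blockdiag}(t'(0),\dots,t'(D))$. $\mathcal X$ is the invertible operator on $\mathbf W$ with matrix $\mathfrak t'\mathfrak t$ in the ordered basis above. *)

theory Defs
  imports "Jordan_Normal_Form.Matrix" Complex_Main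
begin

definition qp :: "nat \<Rightarrow> real \<Rightarrow> complex" where
  "qp q x = complex_of_real (real q powr x)"

text \<open>Matrix t(i) (independent of i), entry (a,b) with a,b in {0,1}.\<close>
definition t_entry :: "nat \<Rightarrow> real \<Rightarrow> nat \<Rightarrow> nat \<Rightarrow> complex" where
  "t_entry q e a b =
     (if a = 0 \<and> b = 0 then qp q (- e / 2) - qp q (e / 2)
      else if a = 0 \<and> b = 1 then qp q (e / 2)
      else if a = 1 \<and> b = 0 then qp q (- e / 2)
      else 0)"

text \<open>Matrix t'(i) for 1 <= i <= D-1, entry (a,b) with a,b in {0,1}.\<close>
definition t'_entry :: "nat \<Rightarrow> nat \<Rightarrow> nat \<Rightarrow> nat \<Rightarrow> nat \<Rightarrow> complex" where
  "t'_entry D q i a b = \<i> *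
     (if a = 0 \<and> b = 0 then qp q (- real D / 2) * (qp q (real D) - qp q (real i) + 1)
      else if a = 0 \<and> b = 1 then qp q (real D / 2) * (qp q (real i - real D) - 1)
      else if a = 1 \<and> b = 0 then qp q (- real D / 2) * (1 - qp q (real i))
      else qp q (real i - real D / 2))"

text \<open>Block diagonal matrix blockdiag(t(0),...,t(D-1)) of size 2D, basis index r
  (0-based) corresponds to hat C_{r div 2}^{-} (r even) or hat C_{r div 2}^{+} (r odd).\<close>
definition tmat :: "nat \<Rightarrow> nat \<Rightarrow> real \<Rightarrow> complex mat" where
  "tmat D q e = mat (2 * D) (2 * D)
     (\<lambda>(r, c). if r div 2 = c div 2 then t_entry q e (r mod 2) (c mod 2) else 0)"

text \<open>Block diagonal matrix blockdiag(t'(0),...,t'(D)) of size 1+2(D-1)+1 = 2D: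
  t'(0) occupies index 0, t'(i) (1<=i<=D-1) occupies indices 2i-1, 2i,
  t'(D) occupies index 2D-1. The block of index r is (r+1) div 2.\<close>
definition t'mat :: "nat \<Rightarrow> nat \<Rightarrow> complex mat" where
  "t'mat D q = mat (2 * D) (2 * D)
     (\<lambda>(r, c). if (r + 1) div 2 \<noteq> (c + 1) div 2 then 0
              else (let i = (r + 1) div 2 in
                    if i = 0 \<or> i = D then \<i> * qp q (- real D / 2)
                    else t'_entry D q i ((r + 1) mod 2) ((c + 1) mod 2)))"

definition Xmat :: "nat \<Rightarrow> nat \<Rightarrow> real \<Rightarrow> complex mat" where
  "Xmat D q e = t'mat D q * tmat D q e"

definition tau :: "nat \<Rightarrow> nat \<Rightarrow> real \<Rightarrow> complex" where
  "tau D q e = \<i> * qp q (- (real D + e) / 2)"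

text \<open>p^perp(X) with X^{-1} given by Y.\<close>
definition p_perp :: "nat \<Rightarrow> nat \<Rightarrow> real \<Rightarrow> complex mat \<Rightarrow> complex mat \<Rightarrow> complex mat" where
  "p_perp D q e Y X = Y * ((X - tau D q e \<cdot>\<^sub>m 1\<^sub>m (dim_row X)) *
      (X - (inverse (tau D q e) * qp q (- real D)) \<cdot>\<^sub>m 1\<^sub>m (dim_row X)))"

definition h_perp :: "nat \<Rightarrow> nat \<Rightarrow> real \<Rightarrow> complex mat \<Rightarrow> complex mat \<Rightarrow> complex mat" where
  "h_perp D q e Y X = (Y ^\<^sub>m (D - 1)) *
      foldr (\<lambda>n M. ((X - (tau D q e * qp q (real n)) \<cdot>\<^sub>m 1\<^sub>m (dim_row X)) *
                     (X - (inverse (tau D q e) * qp q (- real n)) \<cdot>\<^sub>m 1\<^sub>m (dim_row X))) * M)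
            [1..<D] (1\<^sub>m (dim_row X))"

definition prime_power :: "nat \<Rightarrow> bool" where
  "prime_power q \<longleftrightarrow> (\<exists>p k. prime p \<and> k > 0 \<and> q = p ^ k)"

end

theory Submission
  imports Defs "HOL-Computational_Algebra.Polynomial" "Jordan_Normal_Form.Determinant"
begin

(*
  Write Z = X + X^-1 / q. A pair of factors (X - c)(X - d) with c d = 1/q equals X (Z - (c + d)),
  and the roots of p^perp h^perp_{D-1} pair up this way as tau q^m and tau^-1 q^(-m-1) for
  0 <= m < D. Hence, up to powers of X and X^-1 (which commute with everything in sight), the
  polynomial in X is prod_{m<D} (Z - z_m) with z_m = tau q^m + tau^-1 q^(-m-1).
  The hat C_i^- coordinates of Z v depend only on those of v, through a tridiagonal operator; in
  the basis i |-> q^(-ik), 0 <= k < D (a basis by polynomial interpolation), that operator is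
  triangular with diagonal entries z_k. So prod (Z - z_m) v has vanishing hat C_i^- coordinates
  for every v. On such vectors X carries the hat C_i^+ coordinate onto the hat C_i^- coordinate
  with a nonzero factor, and X commutes with the product, so the product is zero.
*)

lemma qp_add: "q > 0 \<Longrightarrow> qp q x * qp q y = qp q (x + y)"
  by (simp add: qp_def powr_add)

lemma qp_zero: "q > 0 \<Longrightarrow> qp q 0 = 1"
  by (simp add: qp_def)

lemma qp_of_nat: "q > 0 \<Longrightarrow> qp q (real k) = of_nat q ^ k"
  by (simp add: qp_def powr_realpow)

lemma qp_minus_of_nat: "q > 0 \<Longrightarrow> qp q (- real k) = inverse (of_nat q ^ k)"
  by (simp add: qp_def powr_minus powr_realpow)

lemma poly_interpolation_exists:
  fixes x w :: "nat \<Rightarrow> 'a :: field"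
  assumes "inj_on x {..m}"
  shows "\<exists>p. degree p \<le> m \<and> (\<forall>i\<le>m. poly p (x i) = w i)"
  using assms
proof (induction m)
  case 0
  show ?case by (rule exI[of _ "[:w 0:]"]) simp
next
  case (Suc m)
  then obtain p where p: "degree p \<le> m" "\<And>i. i \<le> m \<Longrightarrow> poly p (x i) = w i"
    by (auto simp: inj_on_subset[OF Suc.prems])
  define N where "N = (\<Prod>j\<le>m. [:- x j, 1:])"
  have N_nodes: "poly N (x i) = 0" if "i \<le> m" for i
    using that by (auto simp: N_def poly_prod)
  have "x (Suc m) \<noteq> x j" if "j \<le> m" for j
    using inj_onD[OF Suc.prems, of "Suc m" j] that by auto
  then have N_new: "poly N (x (Suc m)) \<noteq> 0"
    by (auto simp: N_def poly_prod)
  have "degree N \<le> Suc m"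
    using degree_prod_sum_le[of "{..m}" "\<lambda>j. [:- x j, 1:]"] by (simp add: N_def)
  define c where "c = (w (Suc m) - poly p (x (Suc m))) / poly N (x (Suc m))"
  have "degree (p + smult c N) \<le> Suc m"
    using p(1) \<open>degree N \<le> Suc m\<close> degree_add_le degree_smult_le le_SucI order_trans by meson
  moreover have "poly (p + smult c N) (x i) = w i" if "i \<le> Suc m" for i
    using that p N_nodes N_new by (cases "i = Suc m") (auto simp: c_def)
  ultimately show ?case by blast
qed

lemma foldr_comp_id: "foldr (\<lambda>m. (\<circ>) (h m)) xs g = foldr (\<lambda>m. (\<circ>) (h m)) xs id \<circ> g"
  by (induct xs) (auto simp: comp_assoc)

lemma foldr_comp_mset_cong:
  assumes comm: "\<And>x y. f x \<circ> f y = f y \<circ> f x" and "mset xs = mset ys"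
  shows "foldr (\<lambda>x g. f x \<circ> g) xs id = foldr (\<lambda>x g. f x \<circ> g) ys id"
proof -
  interpret comp_fun_commute "\<lambda>x g. f x \<circ> g"
    by unfold_locales (simp add: fun_eq_iff comm[unfolded fun_eq_iff comp_def] comp_def)
  have "foldr (\<lambda>x g. f x \<circ> g) zs id = fold_mset (\<lambda>x g. f x \<circ> g) id (mset zs)" for zs
  proof (induction zs)
    case (Cons x zs)
    have "fold_mset (\<lambda>x g. f x \<circ> g) id (mset (x # zs))
        = f x \<circ> fold_mset (\<lambda>x g. f x \<circ> g) id (mset zs)"
      by (simp only: mset.simps fold_mset_add_mset)
    with Cons.IH show ?case by (metis comp_apply foldr.simps(2))
  qed simp
  then show ?thesis using assms(2) by simp
qed

lemma mset_concat_map_pair: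
  "mset (concat (map (\<lambda>k. [f k, g k]) ks)) = mset (map f ks) + mset (map g ks)"
  by (induction ks) auto

lemma index_mult_mat_vec_vec:
  "M \<in> carrier_mat n n \<Longrightarrow> r < n \<Longrightarrow> (M *\<^sub>v vec n f) $ r = (\<Sum>c<n. M $$ (r, c) * f c)"
  by (simp add: scalar_prod_def lessThan_atLeast0)

lemma sum_if_mult:
  fixes f g :: "'a \<Rightarrow> 'b :: semiring_0"
  assumes "finite A"
  shows "(\<Sum>c\<in>A. (if P c then g c else 0) * f c) = (\<Sum>c\<in>{c \<in> A. P c}. g c * f c)"
  using assms by (simp add: sum.inter_filter) (rule sum.cong, simp_all)

lemma mat_eq_zero_if_mult_vec_zero:
  fixes M :: "'a :: comm_ring_1 mat"
  assumes M: "M \<in> carrier_mat n n" and zero: "\<And>f. M *\<^sub>v vec n f = 0\<^sub>v n"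
  shows "M = 0\<^sub>m n n"
proof (rule eq_matI)
  fix i j assume "i < dim_row (0\<^sub>m n n :: 'a mat)" "j < dim_col (0\<^sub>m n n :: 'a mat)"
  then have i: "i < n" and j: "j < n" by auto
  have "(M *\<^sub>v vec n (\<lambda>k. if k = j then 1 else 0)) $ i = M $$ (i, j)"
    using j by (simp add: index_mult_mat_vec_vec[OF M i] if_distrib[of "\<lambda>x. _ * x"] cong: if_cong)
  then show "M $$ (i, j) = 0\<^sub>m n n $$ (i, j)" using zero i j by simp
qed (use M in auto)

lemma mult_commute_pow_mat:
  assumes "A \<in> carrier_mat n n" "B \<in> carrier_mat n n" "A * B = B * A"
  shows "A * B ^\<^sub>m k = B ^\<^sub>m k * A"
proof (induction k)
  case (Suc k)
  have "A * B ^\<^sub>m Suc k = (A * B ^\<^sub>m k) * B" using assms by (simp add: assoc_mult_mat[of _ n n _ n])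
  also have "\<dots> = B ^\<^sub>m k * (A * B)" using assms by (simp add: Suc assoc_mult_mat[of _ n n _ n])
  also have "\<dots> = B ^\<^sub>m Suc k * A" using assms by (simp add: assoc_mult_mat[of _ n n _ n])
  finally show ?case .
qed (use assms in simp)

lemma minus_smult_one_commute_left_inverse:
  fixes X Y :: "'a :: field mat"
  assumes X: "X \<in> carrier_mat n n" and Y: "Y \<in> carrier_mat n n" and YX: "Y * X = 1\<^sub>m n"
  shows "(X - c \<cdot>\<^sub>m 1\<^sub>m n) * Y = Y * (X - c \<cdot>\<^sub>m 1\<^sub>m n)"
proof -
  have XY: "X * Y = 1\<^sub>m n" by (rule mat_mult_left_right_inverse[OF Y X YX])
  have "(X - c \<cdot>\<^sub>m 1\<^sub>m n) * Y = 1\<^sub>m n - c \<cdot>\<^sub>m Y"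
    using X Y by (simp add: minus_mult_distrib_mat[of _ n n] XY mult_smult_assoc_mat[of _ n n])
  also have "\<dots> = Y * (X - c \<cdot>\<^sub>m 1\<^sub>m n)"
    using X Y by (simp add: mult_minus_distrib_mat[of _ n n] YX mult_smult_distrib[of _ n n _ n])
  finally show ?thesis .
qed

lemma mult_commute_mult_mat:
  assumes "A \<in> carrier_mat n n" "B \<in> carrier_mat n n" "Y \<in> carrier_mat n n"
    and "A * Y = Y * A" "B * Y = Y * B"
  shows "(A * B) * Y = Y * (A * B)"
proof -
  have "(A * B) * Y = A * (Y * B)" using assms by (simp add: assoc_mult_mat[of _ n n _ n])
  also have "\<dots> = Y * (A * B)" using assms by (metis assoc_mult_mat)
  finally show ?thesis .
qed

lemma mult_pow_mult_zero:
  assumes Y: "Y \<in> carrier_mat n n" and A: "A \<in> carrier_mat n n" and P: "P \<in> carrier_mat n n"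
    and comm: "A * Y = Y * A" and zero: "A * P = 0\<^sub>m n n"
  shows "(Y * A) * (Y ^\<^sub>m k * P) = 0\<^sub>m n n"
proof -
  have Yk: "Y ^\<^sub>m k \<in> carrier_mat n n" using Y by simp
  have "(Y * A) * (Y ^\<^sub>m k * P) = Y * ((A * Y ^\<^sub>m k) * P)"
    using assoc_mult_mat[OF Y A mult_carrier_mat[OF Yk P]] assoc_mult_mat[OF A Yk P] by simp
  also have "\<dots> = Y * (Y ^\<^sub>m k * (A * P))"
    using Y A P Yk by (simp add: mult_commute_pow_mat[OF A Y comm] assoc_mult_mat[OF Yk A P])
  finally show ?thesis using Y Yk by (simp add: zero)
qed

section \<open>The operators of the paper on coordinate functions\<close>

text \<open>A vector of \<open>W\<close> is represented by a function \<open>nat \<Rightarrow> complex\<close>: coordinate \<open>2 i\<close>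
  is the coefficient of \<open>hat C\<^sub>i\<^sup>-\<close> and \<open>2 i + 1\<close> that of \<open>hat C\<^sub>i\<^sup>+\<close>. All operators
  vanish outside \<open>[0, 2 D)\<close> and only read their argument there.\<close>

locale dual_polar_params =
  fixes D q :: nat and e :: real
  assumes D_pos: "D \<ge> 1" and q_gt_1: "q > 1"
begin

abbreviation n :: nat where "n \<equiv> 2 * D"

definition Q :: complex where "Q = of_nat q"
definition a :: complex where "a = qp q (- e / 2)"
definition s :: complex where "s = qp q (real D / 2)"

lemma q_pos: "q > 0" using q_gt_1 by simp

lemma Q_nonzero: "Q \<noteq> 0" using q_pos by (simp add: Q_def)

lemma qp_nat: "qp q (real k) = Q ^ k"
  using q_pos by (simp add: qp_of_nat Q_def)

lemma qp_minus_nat: "qp q (- real k) = inverse (Q ^ k)"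
  using q_pos by (simp add: qp_minus_of_nat Q_def)

lemma qp_half_e: "qp q (e / 2) = inverse a"
  by (simp add: a_def qp_def powr_minus)

lemma qp_minus_half_D: "qp q (- real D / 2) = inverse s"
  by (simp add: s_def qp_def powr_minus)

lemma a_nonzero: "a \<noteq> 0" using q_pos by (simp add: a_def qp_def)

lemma s_nonzero: "s \<noteq> 0" using q_pos by (simp add: s_def qp_def)

lemma qp_diff_nat: "qp q (real i - real D) = Q ^ i / Q ^ D"
  using qp_add[OF q_pos, of "real i" "- real D"] by (simp add: qp_nat qp_minus_nat divide_inverse)

lemma qp_diff_half_D: "qp q (real i - real D / 2) = Q ^ i * inverse s"
  using qp_add[OF q_pos, of "real i" "- real D / 2"] by (simp add: qp_nat qp_minus_half_D[simplified])

lemma Q_pow_D: "Q ^ D = s * s"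
  using qp_add[OF q_pos, of "real D / 2" "real D / 2"] by (simp add: s_def qp_nat)

lemma Q_pow_D_minus_1: "Q ^ (D - 1) = s * s / Q"
  using D_pos Q_nonzero Q_pow_D power_minus_mult[of D Q] by (simp add: field_simps)

lemma tau_eq: "tau D q e = \<i> * inverse s * a"
proof -
  have "qp q (- (real D + e) / 2) = qp q (- real D / 2 + - e / 2)"
    by (rule arg_cong[where f = "qp q"]) simp
  then show ?thesis
    by (simp only: tau_def a_def qp_add[OF q_pos, symmetric] qp_minus_half_D mult.assoc)
qed

definition t_op :: "(nat \<Rightarrow> complex) \<Rightarrow> nat \<Rightarrow> complex" where
  "t_op v r = (if r < n then
     if even r then (a - inverse a) * v r + inverse a * v (Suc r) else a * v (r - 1)
   else 0)"

definition t_op_inv :: "(nat \<Rightarrow> complex) \<Rightarrow> nat \<Rightarrow> complex" where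
  "t_op_inv v r = (if r < n then
     if even r then inverse a * v (Suc r) else a * v (r - 1) - (a - inverse a) * v r
   else 0)"

definition t'_op :: "(nat \<Rightarrow> complex) \<Rightarrow> nat \<Rightarrow> complex" where
  "t'_op v r = (if r < n then
     if r = 0 \<or> r = n - 1 then \<i> * inverse s * v r
     else if odd r then
       (let k = (r + 1) div 2 in
        \<i> * inverse s * (Q ^ D - Q ^ k + 1) * v r + \<i> * s * (Q ^ k / Q ^ D - 1) * v (Suc r))
     else
       (let k = r div 2 in
        \<i> * inverse s * (1 - Q ^ k) * v (r - 1) + \<i> * Q ^ k * inverse s * v r)
   else 0)"

definition t'_op_inv :: "(nat \<Rightarrow> complex) \<Rightarrow> nat \<Rightarrow> complex" where
  "t'_op_inv v r = (if r < n then
     if r = 0 \<or> r = n - 1 then - \<i> * s * v r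
     else if odd r then
       (let k = (r + 1) div 2 in
        - \<i> * (Q ^ k * inverse s * v r + (s - Q ^ k * inverse s) * v (Suc r)))
     else
       (let k = r div 2 in
        - \<i> * (inverse s * (Q ^ k - 1) * v (r - 1) + (s + inverse s - Q ^ k * inverse s) * v r))
   else 0)"

lemma index_cases:
  assumes "r < n"
  obtains (first) "r = 0" | (last) "r = n - 1"
    | (odd_interior) k where "r = 2 * k - 1" "0 < k" "k < D"
    | (even_interior) k where "r = 2 * k" "0 < k" "k < D"
proof -
  consider "r = 0" | "r = n - 1" | "odd r" "r \<noteq> n - 1" | "even r" "r \<noteq> 0" by blast
  then show ?thesis
  proof cases
    case 3
    then show ?thesis using assms by (intro odd_interior[of "(r + 1) div 2"]) presburger+
  next
    case 4
    then show ?thesis using assms by (intro even_interior[of "r div 2"]) presburger+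
  qed (use first last in auto)
qed

lemma t_op_inverse:
  assumes "r < n"
  shows "t_op (t_op_inv v) r = v r \<and> t_op_inv (t_op v) r = v r"
  using assms a_nonzero by (cases "even r") (auto simp: t_op_def t_op_inv_def field_simps elim!: oddE)

lemma t'_op_inverse:
  assumes "r < n"
  shows "t'_op (t'_op_inv v) r = v r \<and> t'_op_inv (t'_op v) r = v r"
  using assms
proof (cases rule: index_cases)
  case (odd_interior k)
  then have "odd r" "r \<noteq> 0" "r \<noteq> n - 1" "(r + 1) div 2 = k" "Suc r = 2 * k" "2 * k \<noteq> n - 1"
    "2 * k < n"
    by presburger+
  with odd_interior s_nonzero show ?thesis
    by (simp add: t'_op_def t'_op_inv_def Q_pow_D field_simps)
next
  case (even_interior k)
  then have "even r" "r \<noteq> 0" "r \<noteq> n - 1" "r div 2 = k" "odd (r - 1)" "r - 1 < n" "r - 1 \<noteq> 0"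
    "r - 1 \<noteq> n - 1" "(r - 1 + 1) div 2 = k" "Suc (r - 1) = r"
    by presburger+
  with even_interior s_nonzero show ?thesis
    by (simp add: t'_op_def t'_op_inv_def Q_pow_D field_simps)
qed (use D_pos s_nonzero in \<open>auto simp: t'_op_def t'_op_inv_def field_simps\<close>)

lemma t_op_cong:
  assumes "\<And>j. j < n \<Longrightarrow> f j = g j" shows "t_op f = t_op g"
proof
  fix r
  have "even r \<Longrightarrow> r < n \<Longrightarrow> Suc r < n" by presburger
  then show "t_op f r = t_op g r" using assms by (simp add: t_op_def)
qed

lemma t_op_inv_cong:
  assumes "\<And>j. j < n \<Longrightarrow> f j = g j" shows "t_op_inv f = t_op_inv g"
proof
  fix r
  have "even r \<Longrightarrow> r < n \<Longrightarrow> Suc r < n" by presburger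
  then show "t_op_inv f r = t_op_inv g r" using assms by (simp add: t_op_inv_def)
qed

lemma t'_op_cong:
  assumes "\<And>j. j < n \<Longrightarrow> f j = g j" shows "t'_op f = t'_op g"
proof
  fix r
  have "r \<noteq> n - 1 \<Longrightarrow> r < n \<Longrightarrow> Suc r < n" by linarith
  then show "t'_op f r = t'_op g r" using assms by (simp add: t'_op_def Let_def)
qed

lemma t_op_linear: "t_op (\<lambda>j. \<alpha> * f j + \<beta> * g j) = (\<lambda>r. \<alpha> * t_op f r + \<beta> * t_op g r)"
  by (rule ext) (simp add: t_op_def algebra_simps)

lemma t'_op_linear: "t'_op (\<lambda>j. \<alpha> * f j + \<beta> * g j) = (\<lambda>r. \<alpha> * t'_op f r + \<beta> * t'_op g r)"
  by (rule ext) (simp add: t'_op_def Let_def algebra_simps add_divide_distrib)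

definition X_op :: "(nat \<Rightarrow> complex) \<Rightarrow> nat \<Rightarrow> complex" where
  "X_op v = t'_op (t_op v)"

definition X_op_inv :: "(nat \<Rightarrow> complex) \<Rightarrow> nat \<Rightarrow> complex" where
  "X_op_inv v = t_op_inv (t'_op_inv v)"

lemma X_op_cong: "(\<And>j. j < n \<Longrightarrow> f j = g j) \<Longrightarrow> X_op f = X_op g"
  unfolding X_op_def by (metis t_op_cong)

lemma X_op_linear: "X_op (\<lambda>j. \<alpha> * f j + \<beta> * g j) = (\<lambda>r. \<alpha> * X_op f r + \<beta> * X_op g r)"
  unfolding X_op_def t_op_linear t'_op_linear ..

lemma X_op_zero: "X_op (\<lambda>_. 0) = (\<lambda>_. 0)"
  using X_op_linear[of 0 "\<lambda>_. 0" 0 "\<lambda>_. 0"] by simp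

lemma X_op_outside: "n \<le> r \<Longrightarrow> X_op v r = 0"
  by (simp add: X_op_def t'_op_def)

lemma X_op_inv_outside: "n \<le> r \<Longrightarrow> X_op_inv v r = 0"
  by (simp add: X_op_inv_def t_op_inv_def)

lemma X_op_inv_right: "r < n \<Longrightarrow> X_op (X_op_inv v) r = v r"
proof -
  assume "r < n"
  moreover have "t'_op (t_op (t_op_inv (t'_op_inv v))) = t'_op (t'_op_inv v)"
    by (rule t'_op_cong) (simp add: t_op_inverse)
  ultimately show ?thesis by (simp add: X_op_def X_op_inv_def t'_op_inverse)
qed

lemma X_op_inv_left: "r < n \<Longrightarrow> X_op_inv (X_op v) r = v r"
proof -
  assume "r < n"
  moreover have "t_op_inv (t'_op_inv (t'_op (t_op v))) = t_op_inv (t_op v)"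
    by (rule t_op_inv_cong) (simp add: t'_op_inverse)
  ultimately show ?thesis by (simp add: X_op_def X_op_inv_def t_op_inverse)
qed

section \<open>The operator \<open>Z = X + X\<inverse> / q\<close> on even coordinates\<close>

definition Z_op :: "(nat \<Rightarrow> complex) \<Rightarrow> nat \<Rightarrow> complex" where
  "Z_op v r = X_op v r + X_op_inv v r / Q"

definition Z_even :: "(nat \<Rightarrow> complex) \<Rightarrow> nat \<Rightarrow> complex" where
  "Z_even w i = \<i> * inverse s * (a * (1 - Q ^ i) * w (i - 1) + (a - inverse a) * Q ^ i * w i
     + (Q ^ i - Q ^ (D - 1)) * inverse a * w (Suc i))"

lemma t_op_even:
  "i < D \<Longrightarrow> t_op v (2 * i) = (a - inverse a) * v (2 * i) + inverse a * v (Suc (2 * i))"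
  by (simp add: t_op_def)

lemma t_op_odd: "i < D \<Longrightarrow> t_op v (Suc (2 * i)) = a * v (2 * i)"
  by (simp add: t_op_def)

lemma t_op_inv_even: "i < D \<Longrightarrow> t_op_inv v (2 * i) = inverse a * v (Suc (2 * i))"
  by (simp add: t_op_inv_def)

lemma t'_op_even:
  assumes "i < D"
  shows "t'_op v (2 * i) = \<i> * inverse s * ((1 - Q ^ i) * v (2 * i - 1) + Q ^ i * v (2 * i))"
proof (cases "i = 0")
  case False
  with assms have "2 * i \<noteq> n - 1" by presburger
  with False assms show ?thesis by (simp add: t'_op_def algebra_simps)
qed (use D_pos in \<open>simp add: t'_op_def\<close>)

text \<open>At the last index \<open>Q ^ D = s * s\<close> makes the second term vanish, so one formula
  covers all odd indices.\<close>
lemma t'_op_inv_odd: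
  assumes "i < D"
  shows "t'_op_inv v (Suc (2 * i)) =
    - \<i> * inverse s * (Q ^ Suc i * v (Suc (2 * i)) + (s * s - Q ^ Suc i) * v (2 * Suc i))"
proof (cases "Suc i = D")
  case True
  then have "Suc (2 * i) = n - 1" by simp
  with True s_nonzero show ?thesis by (simp add: t'_op_inv_def Q_pow_D field_simps)
next
  case False
  with assms have "Suc (2 * i) \<noteq> n - 1" "(Suc (2 * i) + 1) div 2 = Suc i"
    "Suc (Suc (2 * i)) = 2 * Suc i"
    by presburger+
  with assms s_nonzero show ?thesis by (simp add: t'_op_inv_def field_simps)
qed

lemma X_op_even:
  assumes i: "i < D"
  shows "X_op v (2 * i) = \<i> * inverse s * ((1 - Q ^ i) * a * v (2 * (i - 1)) + Q ^ i * t_op v (2 * i))"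
proof -
  have "(1 - Q ^ i) * t_op v (2 * i - 1) = (1 - Q ^ i) * a * v (2 * (i - 1))"
  proof (cases i)
    case (Suc j)
    then have "2 * i - 1 = Suc (2 * j)" by simp
    with Suc i show ?thesis by (simp add: t_op_odd)
  qed simp
  with i show ?thesis by (simp add: X_op_def t'_op_even)
qed

lemma Z_op_even: "i < D \<Longrightarrow> Z_op v (2 * i) = Z_even (\<lambda>j. v (2 * j)) i"
  unfolding Z_op_def X_op_even X_op_inv_def t_op_inv_even t_op_even t'_op_inv_odd Z_even_def
    Q_pow_D_minus_1
  using Q_nonzero s_nonzero a_nonzero by (simp add: field_simps)

definition node :: "nat \<Rightarrow> complex" where "node i = inverse (Q ^ i)"

definition node_power :: "nat \<Rightarrow> nat \<Rightarrow> complex" where "node_power k i = node i ^ k"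

definition root_up :: "nat \<Rightarrow> complex" where "root_up m = tau D q e * qp q (real m)"

definition root_down :: "nat \<Rightarrow> complex" where
  "root_down m = inverse (tau D q e) * qp q (- real m)"

definition Z_eigenvalue :: "nat \<Rightarrow> complex" where
  "Z_eigenvalue m = root_up m + root_down (Suc m)"

definition Z_offdiag :: "nat \<Rightarrow> complex" where
  "Z_offdiag k = \<i> * inverse s * (a - inverse a - a * Q ^ k + inverse a * inverse (Q ^ k))"

lemma root_up_root_down: "root_up m * root_down (Suc m) = inverse Q"
  unfolding root_up_def root_down_def tau_eq qp_nat qp_minus_nat
  using s_nonzero a_nonzero Q_nonzero by (simp add: field_simps)

lemma Z_eigenvalue_eq:
  "Z_eigenvalue k = \<i> * inverse s * (a * Q ^ k - Q ^ (D - 1) * inverse a * inverse (Q ^ k))"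
  unfolding Z_eigenvalue_def root_up_def root_down_def tau_eq qp_nat qp_minus_nat Q_pow_D_minus_1
  using s_nonzero a_nonzero Q_nonzero by (simp add: field_simps)

lemma node_inj: "inj node"
proof
  fix i j assume "node i = node j"
  then have "of_nat (q ^ i) = (of_nat (q ^ j) :: complex)" by (simp add: node_def Q_def)
  then have "q ^ i = q ^ j" by (simp only: of_nat_eq_iff)
  then show "i = j" using q_gt_1 by simp
qed

lemma Z_even_node_power:
  "Z_even (node_power k) i = Z_eigenvalue k * node_power k i + Z_offdiag k * node_power (k - 1) i"
proof -
  define y where "y = node_power k i"
  have prev: "a * (1 - Q ^ i) * node_power k (i - 1) = a * (1 - Q ^ i) * (Q ^ k * y)"
    using Q_nonzero by (cases i) (simp_all add: y_def node_power_def node_def field_simps)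
  have next': "node_power k (Suc i) = inverse (Q ^ k) * y"
    using Q_nonzero by (simp add: y_def node_power_def node_def field_simps)
  have "Z_even (node_power k) i = \<i> * inverse s * (a * (1 - Q ^ i) * (Q ^ k * y)
      + (a - inverse a) * Q ^ i * y + (Q ^ i - Q ^ (D - 1)) * inverse a * (inverse (Q ^ k) * y))"
    unfolding Z_even_def prev next' y_def ..
  also have "\<dots> = Z_eigenvalue k * y + Z_offdiag k * node_power (k - 1) i"
  proof (cases k)
    case 0
    then show ?thesis
      using Q_nonzero a_nonzero s_nonzero by (simp add: Z_eigenvalue_eq Z_offdiag_def field_simps)
  next
    case (Suc j)
    have "node_power j i = Q ^ i * y"
      using Q_nonzero by (simp add: y_def Suc node_power_def node_def)
    then show ?thesis unfolding Suc diff_Suc_1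
      using Q_nonzero a_nonzero s_nonzero by (simp add: Z_eigenvalue_eq Z_offdiag_def field_simps)
  qed
  finally show ?thesis by (simp add: y_def)
qed

lemma Z_even_cong:
  assumes "\<And>j. j < D \<Longrightarrow> w j = w' j" "i < D"
  shows "Z_even w i = Z_even w' i"
proof (cases "Suc i < D")
  case False
  with assms have "i = D - 1" by simp
  with assms show ?thesis by (simp add: Z_even_def)
qed (use assms in \<open>simp add: Z_even_def\<close>)

lemma Z_even_sum:
  "Z_even (\<lambda>j. \<Sum>k<D. c k * node_power k j) i = (\<Sum>k<D. c k * Z_even (node_power k) i)"
  unfolding Z_even_def
  by (simp add: sum_distrib_left sum.distrib ring_distribs mult.assoc mult.left_commute)

definition Z_even_shift :: "complex \<Rightarrow> (nat \<Rightarrow> complex) \<Rightarrow> nat \<Rightarrow> complex" where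
  "Z_even_shift z w i = Z_even w i - z * w i"

definition spanned_below :: "nat \<Rightarrow> (nat \<Rightarrow> complex) \<Rightarrow> bool" where
  "spanned_below m w \<longleftrightarrow>
     (\<exists>c. (\<forall>k\<ge>m. c k = 0) \<and> (\<forall>i<D. w i = (\<Sum>k<D. c k * node_power k i)))"

lemma spanned_below_D: "spanned_below D w"
proof -
  obtain p where p: "degree p \<le> D - 1" "\<And>i. i \<le> D - 1 \<Longrightarrow> poly p (node i) = w i"
    using poly_interpolation_exists[OF inj_on_subset[OF node_inj subset_UNIV]] by blast
  have deg: "degree p < D" using p(1) D_pos by linarith
  have "w i = (\<Sum>k<D. coeff p k * node_power k i)" if "i < D" for i
  proof -
    have "w i = (\<Sum>k\<le>degree p. coeff p k * node i ^ k)"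
      using p(2)[of i] that by (simp add: poly_altdef)
    also have "\<dots> = (\<Sum>k<D. coeff p k * node i ^ k)"
      by (rule sum.mono_neutral_left) (use deg in \<open>auto intro: coeff_eq_0\<close>)
    finally show ?thesis by (simp add: node_power_def)
  qed
  moreover have "\<forall>k\<ge>D. coeff p k = 0" using deg by (auto intro: coeff_eq_0)
  ultimately show ?thesis unfolding spanned_below_def by blast
qed

lemma spanned_below_Z_even_shift:
  assumes m: "Suc m \<le> D" and w: "spanned_below (Suc m) w"
  shows "spanned_below m (Z_even_shift (Z_eigenvalue m) w)"
proof -
  obtain c where c_top: "\<And>k. k \<ge> Suc m \<Longrightarrow> c k = 0"
    and c_w: "\<And>i. i < D \<Longrightarrow> w i = (\<Sum>k<D. c k * node_power k i)"
    using w unfolding spanned_below_def by blast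
  define c' where
    "c' k = c k * (Z_eigenvalue k - Z_eigenvalue m) + c (Suc k) * Z_offdiag (Suc k)" for k
  obtain d where d: "D = Suc d" using m by (cases D) auto
  have lower_shift: "(\<Sum>k<D. c k * Z_offdiag k * node_power (k - 1) i)
      = (\<Sum>k<D. c (Suc k) * Z_offdiag (Suc k) * node_power k i)" for i
  proof -
    have shift_first: "(\<Sum>k<D. f k) = f 0 + (\<Sum>k<d. f (Suc k))" for f :: "nat \<Rightarrow> complex"
      unfolding d by (rule sum.lessThan_Suc_shift)
    have split_last: "(\<Sum>k<D. f k) = (\<Sum>k<d. f k) + f d" for f :: "nat \<Rightarrow> complex"
      unfolding d by (rule sum.lessThan_Suc)
    have "(\<Sum>k<D. c k * Z_offdiag k * node_power (k - 1) i)
        = (\<Sum>k<d. c (Suc k) * Z_offdiag (Suc k) * node_power k i)"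
      unfolding shift_first by (simp add: Z_offdiag_def)
    also have "\<dots> = (\<Sum>k<D. c (Suc k) * Z_offdiag (Suc k) * node_power k i)"
      unfolding split_last using c_top[of "Suc d"] m d by auto
    finally show ?thesis .
  qed
  have "Z_even_shift (Z_eigenvalue m) w i = (\<Sum>k<D. c' k * node_power k i)" if i: "i < D" for i
  proof -
    have "Z_even_shift (Z_eigenvalue m) w i
        = Z_even (\<lambda>j. \<Sum>k<D. c k * node_power k j) i
          - Z_eigenvalue m * (\<Sum>k<D. c k * node_power k i)"
      unfolding Z_even_shift_def using c_w i by (simp add: Z_even_cong[of w _ i])
    also have "\<dots> = (\<Sum>k<D. c k * (Z_eigenvalue k - Z_eigenvalue m) * node_power k i)
        + (\<Sum>k<D. c k * Z_offdiag k * node_power (k - 1) i)"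
      unfolding Z_even_sum Z_even_node_power
      by (simp add: sum_distrib_left sum_subtractf[symmetric] sum.distrib[symmetric] algebra_simps)
    finally show ?thesis
      unfolding lower_shift by (simp add: c'_def sum.distrib[symmetric] algebra_simps)
  qed
  moreover have "c' k = 0" if "k \<ge> m" for k
    using that c_top by (cases "k = m") (auto simp: c'_def)
  ultimately show ?thesis unfolding spanned_below_def by blast
qed

definition Z_even_shift_prod :: "nat list \<Rightarrow> (nat \<Rightarrow> complex) \<Rightarrow> nat \<Rightarrow> complex" where
  "Z_even_shift_prod ms = foldr (\<lambda>m g. Z_even_shift (Z_eigenvalue m) \<circ> g) ms id"

lemma Z_even_shift_prod_upt_Suc:
  "Z_even_shift_prod [0..<Suc m] = Z_even_shift_prod [0..<m] \<circ> Z_even_shift (Z_eigenvalue m)"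
  by (simp add: Z_even_shift_prod_def) (rule foldr_comp_id)

lemma Z_even_shift_prod_vanishes_below:
  "m \<le> D \<Longrightarrow> spanned_below m w \<Longrightarrow> i < D \<Longrightarrow> Z_even_shift_prod [0..<m] w i = 0"
proof (induction m arbitrary: w)
  case 0
  then show ?case by (auto simp: spanned_below_def Z_even_shift_prod_def)
next
  case (Suc m)
  then have "Z_even_shift_prod [0..<m] (Z_even_shift (Z_eigenvalue m) w) i = 0"
    by (simp add: spanned_below_Z_even_shift)
  then show ?case by (simp only: Z_even_shift_prod_upt_Suc comp_def)
qed

lemma Z_even_shift_prod_vanishes: "i < D \<Longrightarrow> Z_even_shift_prod [0..<D] w i = 0"
  using Z_even_shift_prod_vanishes_below[OF order.refl spanned_below_D] .

section \<open>The factors \<open>X - c\<close> and the vanishing of their product\<close>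

definition X_shift :: "complex \<Rightarrow> (nat \<Rightarrow> complex) \<Rightarrow> nat \<Rightarrow> complex" where
  "X_shift c v r = (if r < n then X_op v r - c * v r else 0)"

definition Z_shift :: "complex \<Rightarrow> (nat \<Rightarrow> complex) \<Rightarrow> nat \<Rightarrow> complex" where
  "Z_shift z v r = (if r < n then Z_op v r - z * v r else 0)"

lemma Z_op_outside: "n \<le> r \<Longrightarrow> Z_op v r = 0"
  by (simp add: Z_op_def X_op_outside X_op_inv_outside)

lemma X_op_X_shift: "X_op (X_shift c v) = (\<lambda>r. X_op (X_op v) r - c * X_op v r)"
proof -
  have "X_op (X_shift c v) = X_op (\<lambda>j. 1 * X_op v j + (- c) * v j)"
    by (rule X_op_cong) (simp add: X_shift_def)
  then show ?thesis unfolding X_op_linear by simp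
qed

lemma X_shift_commute: "X_shift c (X_shift d v) = X_shift d (X_shift c v)"
  by (rule ext) (simp add: X_shift_def X_op_X_shift algebra_simps)

lemma X_op_Z_op: "X_op (Z_op v) = (\<lambda>r. X_op (X_op v) r + (if r < n then v r / Q else 0))"
proof -
  have "X_op (Z_op v) = X_op (\<lambda>j. 1 * X_op v j + inverse Q * X_op_inv v j)"
    by (rule X_op_cong) (simp add: Z_op_def divide_inverse mult.commute)
  then show ?thesis
    unfolding X_op_linear by (auto simp: X_op_inv_right X_op_outside divide_inverse mult.commute)
qed

lemma Z_op_X_op: "Z_op (X_op v) = (\<lambda>r. X_op (X_op v) r + (if r < n then v r / Q else 0))"
  by (auto simp: Z_op_def X_op_inv_left X_op_outside X_op_inv_outside)

lemma X_op_Z_shift: "X_op (Z_shift z v) = Z_shift z (X_op v)"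
proof -
  have "X_op (Z_shift z v) = X_op (\<lambda>j. 1 * Z_op v j + (- z) * v j)"
    by (rule X_op_cong) (simp add: Z_shift_def)
  then show ?thesis
    unfolding X_op_linear X_op_Z_op Z_op_X_op[symmetric]
    by (auto simp: Z_shift_def X_op_outside Z_op_outside)
qed

lemma X_shift_pair: "c * d = inverse Q \<Longrightarrow> X_shift c (X_shift d v) = X_op (Z_shift (c + d) v)"
  by (auto simp: X_op_Z_shift X_shift_def Z_shift_def X_op_X_shift Z_op_X_op divide_inverse
      algebra_simps)

definition Z_shift_prod :: "nat list \<Rightarrow> (nat \<Rightarrow> complex) \<Rightarrow> nat \<Rightarrow> complex" where
  "Z_shift_prod ms = foldr (\<lambda>m g. Z_shift (Z_eigenvalue m) \<circ> g) ms id"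

lemma Z_shift_prod_even:
  "i < D \<Longrightarrow> Z_shift_prod ms v (2 * i) = Z_even_shift_prod ms (\<lambda>j. v (2 * j)) i"
proof (induction ms arbitrary: i)
  case Nil
  then show ?case by (simp add: Z_shift_prod_def Z_even_shift_prod_def)
next
  case (Cons m ms)
  have "Z_shift_prod (m # ms) v (2 * i) = Z_even (\<lambda>j. Z_shift_prod ms v (2 * j)) i
      - Z_eigenvalue m * Z_shift_prod ms v (2 * i)"
    using Cons.prems by (simp add: Z_shift_prod_def Z_shift_def Z_op_even)
  also have "\<dots> = Z_even (Z_even_shift_prod ms (\<lambda>j. v (2 * j))) i
      - Z_eigenvalue m * Z_even_shift_prod ms (\<lambda>j. v (2 * j)) i"
    using Cons.IH Cons.prems Z_even_cong[OF Cons.IH Cons.prems] by simp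
  also have "\<dots> = Z_even_shift_prod (m # ms) (\<lambda>j. v (2 * j)) i"
    by (simp add: Z_even_shift_prod_def Z_even_shift_def)
  finally show ?case .
qed

lemma X_op_Z_shift_prod: "X_op (Z_shift_prod ms v) = Z_shift_prod ms (X_op v)"
  by (induction ms) (simp_all add: Z_shift_prod_def X_op_Z_shift)

lemma X_op_even_of_odd_support:
  assumes "\<And>j. j < D \<Longrightarrow> u (2 * j) = 0" and "i < D"
  shows "X_op u (2 * i) = \<i> * inverse s * Q ^ i * inverse a * u (Suc (2 * i))"
  using assms by (simp add: X_op_even t_op_even)

lemma Z_shift_prod_vanishes: "r < n \<Longrightarrow> Z_shift_prod [0..<D] v r = 0"
proof -
  assume r: "r < n"
  have even_zero: "Z_shift_prod [0..<D] v (2 * j) = 0" if "j < D" for v j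
    using that by (simp add: Z_shift_prod_even Z_even_shift_prod_vanishes)
  define i where "i = r div 2"
  have i: "i < D" "r = 2 * i \<or> r = Suc (2 * i)" using r unfolding i_def by presburger+
  have "X_op (Z_shift_prod [0..<D] v) (2 * i) = 0"
    unfolding X_op_Z_shift_prod using even_zero i(1) .
  then have "Z_shift_prod [0..<D] v (Suc (2 * i)) = 0"
    using X_op_even_of_odd_support[of "Z_shift_prod [0..<D] v", OF even_zero i(1)]
      Q_nonzero s_nonzero a_nonzero by simp
  with i even_zero show ?thesis by auto
qed

definition X_pair_prod :: "nat list \<Rightarrow> (nat \<Rightarrow> complex) \<Rightarrow> nat \<Rightarrow> complex" where
  "X_pair_prod ms = foldr (\<lambda>m g. X_shift (root_up m) \<circ> X_shift (root_down (Suc m)) \<circ> g) ms id"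

lemma Z_shift_funpow_X_op: "Z_shift z ((X_op ^^ k) u) = (X_op ^^ k) (Z_shift z u)"
  by (induction k) (simp_all add: X_op_Z_shift[symmetric])

lemma X_pair_prod_eq: "X_pair_prod ms v = (X_op ^^ length ms) (Z_shift_prod ms v)"
proof (induction ms)
  case Nil
  then show ?case by (simp add: X_pair_prod_def Z_shift_prod_def)
next
  case (Cons m ms)
  have "X_pair_prod (m # ms) v
      = X_shift (root_up m) (X_shift (root_down (Suc m)) (X_pair_prod ms v))"
    by (simp add: X_pair_prod_def)
  also have "\<dots> = X_op (Z_shift (Z_eigenvalue m) (X_pair_prod ms v))"
    unfolding Z_eigenvalue_def by (rule X_shift_pair[OF root_up_root_down])
  also have "\<dots> = (X_op ^^ length (m # ms)) (Z_shift_prod (m # ms) v)"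
    by (simp add: Cons Z_shift_funpow_X_op Z_shift_prod_def)
  finally show ?case .
qed

lemma X_op_funpow_vanishing:
  "(\<And>r. r < n \<Longrightarrow> u r = 0) \<Longrightarrow> (X_op ^^ Suc k) u = (\<lambda>_. 0)"
proof (induction k)
  case 0
  have "X_op u = X_op (\<lambda>_. 0)" by (rule X_op_cong) (simp add: 0)
  then show ?case by (simp add: X_op_zero)
next
  case (Suc k)
  then show ?case by (simp add: X_op_zero)
qed

lemma X_pair_prod_vanishes: "X_pair_prod [0..<D] v = (\<lambda>_. 0)"
proof -
  obtain d where "length [0..<D] = Suc d" using D_pos by (cases D) auto
  then have "X_pair_prod [0..<D] v = (X_op ^^ Suc d) (Z_shift_prod [0..<D] v)"
    by (simp only: X_pair_prod_eq)
  also have "\<dots> = (\<lambda>_. 0)" by (rule X_op_funpow_vanishing) (rule Z_shift_prod_vanishes)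
  finally show ?thesis .
qed

lemma tmat_carrier: "tmat D q e \<in> carrier_mat n n"
  by (simp add: tmat_def)

lemma t'mat_carrier: "t'mat D q \<in> carrier_mat n n"
  by (simp add: t'mat_def)

lemma Xmat_carrier: "Xmat D q e \<in> carrier_mat n n"
  using tmat_carrier t'mat_carrier by (simp add: Xmat_def)

lemma tmat_mult_vec: "tmat D q e *\<^sub>v vec n f = vec n (t_op f)"
proof (rule eq_vecI)
  fix r assume "r < dim_vec (vec n (t_op f))"
  then have r: "r < n" by simp
  define i where "i = r div 2"
  have block: "{c \<in> {..<n}. r div 2 = c div 2} = {2 * i, Suc (2 * i)}"
    using r unfolding i_def by auto presburger+
  have "(tmat D q e *\<^sub>v vec n f) $ r
      = (\<Sum>c<n. (if r div 2 = c div 2 then t_entry q e (r mod 2) (c mod 2) else 0) * f c)"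
    unfolding index_mult_mat_vec_vec[OF tmat_carrier r]
    by (rule sum.cong) (use r in \<open>simp_all add: tmat_def\<close>)
  also have "\<dots> = t_entry q e (r mod 2) 0 * f (2 * i) + t_entry q e (r mod 2) 1 * f (Suc (2 * i))"
    unfolding sum_if_mult[OF finite_lessThan] block by simp
  also have "\<dots> = t_op f r"
    using r by (cases "even r") (auto simp: i_def t_op_def t_entry_def a_def qp_half_e elim!: oddE)
  finally show "(tmat D q e *\<^sub>v vec n f) $ r = vec n (t_op f) $ r" using r by simp
qed (simp add: tmat_def)

lemma t'mat_mult_vec: "t'mat D q *\<^sub>v vec n f = vec n (t'_op f)"
proof (rule eq_vecI)
  fix r assume "r < dim_vec (vec n (t'_op f))"
  then have r: "r < n" by simp
  define k where "k = (r + 1) div 2"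
  define g where "g c = (if k = 0 \<or> k = D then \<i> * inverse s
     else t'_entry D q k ((r + 1) mod 2) ((c + 1) mod 2))" for c
  have "(t'mat D q *\<^sub>v vec n f) $ r = (\<Sum>c<n. (if k = (c + 1) div 2 then g c else 0) * f c)"
    unfolding index_mult_mat_vec_vec[OF t'mat_carrier r]
    by (rule sum.cong) (use r in \<open>simp_all add: t'mat_def k_def g_def qp_minus_half_D[simplified]\<close>)
  also have "\<dots> = (\<Sum>c\<in>{c \<in> {..<n}. k = (c + 1) div 2}. g c * f c)"
    by (rule sum_if_mult) simp
  also have "\<dots> = t'_op f r"
    using r
  proof (cases rule: index_cases)
    case first
    then have "{c \<in> {..<n}. k = (c + 1) div 2} = {0}" using D_pos by (auto simp: k_def)
    with first D_pos show ?thesis by (simp add: g_def k_def t'_op_def)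
  next
    case last
    then have "{c \<in> {..<n}. k = (c + 1) div 2} = {n - 1}" "k = D"
      using D_pos by (auto simp: k_def)
    with last D_pos show ?thesis by (simp add: g_def t'_op_def)
  next
    case (odd_interior i)
    then have "{c \<in> {..<n}. k = (c + 1) div 2} = {r, Suc r}" by (auto simp: k_def)
    moreover have "k = i" "odd r" "r \<noteq> 0" "r \<noteq> n - 1" "(r + 1) mod 2 = 0" "(Suc r + 1) mod 2 = 1"
      "(r + 1) div 2 = i" "i \<noteq> 0" "i \<noteq> D"
      using odd_interior unfolding k_def by presburger+
    ultimately show ?thesis using r
      by (simp add: g_def t'_op_def t'_entry_def qp_nat qp_minus_half_D[simplified] s_def[symmetric]
          qp_diff_nat)
  next
    case (even_interior i)
    then have "{c \<in> {..<n}. k = (c + 1) div 2} = {r - 1, r}" by (auto simp: k_def)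
    moreover have "k = i" "even r" "r \<noteq> 0" "r \<noteq> n - 1" "(r + 1) mod 2 = 1" "(r - 1 + 1) mod 2 = 0"
      "r div 2 = i" "r - 1 \<noteq> r" "i \<noteq> 0" "i \<noteq> D"
      using even_interior unfolding k_def by presburger+
    ultimately show ?thesis using r
      by (simp add: g_def t'_op_def t'_entry_def qp_nat qp_minus_half_D[simplified] qp_diff_half_D)
  qed
  finally show "(t'mat D q *\<^sub>v vec n f) $ r = vec n (t'_op f) $ r" using r by simp
qed (simp add: t'mat_def)

lemma Xmat_mult_vec: "Xmat D q e *\<^sub>v vec n f = vec n (X_op f)"
  unfolding Xmat_def X_op_def
  by (simp add: assoc_mult_mat_vec[OF t'mat_carrier tmat_carrier] tmat_mult_vec t'mat_mult_vec)

lemma dim_row_Xmat: "dim_row (Xmat D q e) = n"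
  using Xmat_carrier by simp

definition X_minus :: "complex \<Rightarrow> complex mat" where
  "X_minus c = Xmat D q e - c \<cdot>\<^sub>m 1\<^sub>m n"

lemma X_minus_carrier: "X_minus c \<in> carrier_mat n n"
  unfolding X_minus_def by (intro minus_carrier_mat smult_carrier_mat one_carrier_mat)

lemma X_minus_mult_vec: "X_minus c *\<^sub>v vec n f = vec n (X_shift c f)"
proof -
  have "X_minus c *\<^sub>v vec n f = Xmat D q e *\<^sub>v vec n f - (c \<cdot>\<^sub>m 1\<^sub>m n) *\<^sub>v vec n f"
    unfolding X_minus_def using Xmat_carrier by (simp add: minus_mult_distrib_mat_vec)
  then show ?thesis by (auto simp: Xmat_mult_vec X_shift_def)
qed

definition X_shift_prod :: "complex list \<Rightarrow> (nat \<Rightarrow> complex) \<Rightarrow> nat \<Rightarrow> complex" where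
  "X_shift_prod cs = foldr (\<lambda>c g. X_shift c \<circ> g) cs id"

lemma X_shift_prod_Cons: "X_shift_prod (c # cs) v = X_shift c (X_shift_prod cs v)"
  by (simp add: X_shift_prod_def)

lemma X_shift_prod_mset_cong: "mset cs = mset cs' \<Longrightarrow> X_shift_prod cs = X_shift_prod cs'"
  unfolding X_shift_prod_def by (rule foldr_comp_mset_cong) (auto simp: fun_eq_iff X_shift_commute)

lemma X_pair_prod_eq_X_shift_prod:
  "X_pair_prod ms = X_shift_prod (concat (map (\<lambda>m. [root_up m, root_down (Suc m)]) ms))"
  by (induction ms) (simp_all add: X_pair_prod_def X_shift_prod_def comp_assoc)

definition h_factor_prod :: "nat list \<Rightarrow> complex mat" where
  "h_factor_prod ks = foldr (\<lambda>k M. (X_minus (root_up k) * X_minus (root_down k)) * M) ks (1\<^sub>m n)"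

lemma h_factor_prod_Cons:
  "h_factor_prod (k # ks) = (X_minus (root_up k) * X_minus (root_down k)) * h_factor_prod ks"
  by (simp add: h_factor_prod_def)

lemma h_factor_prod_carrier: "h_factor_prod ks \<in> carrier_mat n n"
proof (induction ks)
  case (Cons k ks)
  show ?case unfolding h_factor_prod_Cons
    by (rule mult_carrier_mat[OF mult_carrier_mat[OF X_minus_carrier X_minus_carrier] Cons.IH])
qed (simp add: h_factor_prod_def)

lemma h_factor_prod_mult_vec:
  "h_factor_prod ks *\<^sub>v vec n f = vec n (X_shift_prod (concat (map (\<lambda>k. [root_up k, root_down k]) ks)) f)"
proof (induction ks arbitrary: f)
  case Nil
  then show ?case by (simp add: h_factor_prod_def X_shift_prod_def)
next
  case (Cons k ks)
  have "h_factor_prod ks *\<^sub>v vec n f \<in> carrier_vec n"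
    using h_factor_prod_carrier by (rule mult_mat_vec_carrier) simp
  then have "h_factor_prod (k # ks) *\<^sub>v vec n f
      = X_minus (root_up k) *\<^sub>v (X_minus (root_down k) *\<^sub>v (h_factor_prod ks *\<^sub>v vec n f))"
    unfolding h_factor_prod_Cons
    by (simp add: assoc_mult_mat_vec[OF mult_carrier_mat[OF X_minus_carrier X_minus_carrier]
        h_factor_prod_carrier] assoc_mult_mat_vec[OF X_minus_carrier X_minus_carrier])
  then show ?case by (simp add: Cons X_minus_mult_vec X_shift_prod_Cons)
qed

lemma annihilator_eq_zero:
  "(X_minus (root_up 0) * X_minus (root_down D)) * h_factor_prod [1..<D] = 0\<^sub>m n n"
proof (rule mat_eq_zero_if_mult_vec_zero)
  show "(X_minus (root_up 0) * X_minus (root_down D)) * h_factor_prod [1..<D] \<in> carrier_mat n n"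
    by (rule mult_carrier_mat[OF mult_carrier_mat[OF X_minus_carrier X_minus_carrier]
        h_factor_prod_carrier])
  fix f
  let ?cs = "concat (map (\<lambda>k. [root_up k, root_down k]) [1..<D])"
  have "mset (root_up 0 # root_down D # ?cs)
      = mset (concat (map (\<lambda>m. [root_up m, root_down (Suc m)]) [0..<D]))"
  proof -
    have first: "[0..<D] = 0 # [1..<D]" using D_pos by (simp add: upt_conv_Cons)
    have shifted: "map (\<lambda>m. root_down (Suc m)) [0..<D] = map root_down [1..<D] @ [root_down D]"
    proof -
      have "map (\<lambda>m. root_down (Suc m)) [0..<D] = map root_down (map Suc [0..<D])" by simp
      also have "\<dots> = map root_down [1..<Suc D]" by (simp only: map_Suc_upt) simp
      finally show ?thesis using D_pos by simp
    qed
    show ?thesis unfolding mset_concat_map_pair shifted by (simp add: first mset_concat_map_pair)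
  qed
  then have "X_shift_prod (root_up 0 # root_down D # ?cs) = X_pair_prod [0..<D]"
    unfolding X_pair_prod_eq_X_shift_prod by (rule X_shift_prod_mset_cong)
  then have "X_shift_prod (root_up 0 # root_down D # ?cs) f = (\<lambda>_. 0)"
    by (simp add: X_pair_prod_vanishes)
  then have "X_shift (root_up 0) (X_shift (root_down D) (X_shift_prod ?cs f)) = (\<lambda>_. 0)"
    by (simp only: X_shift_prod_Cons)
  then show "((X_minus (root_up 0) * X_minus (root_down D)) * h_factor_prod [1..<D]) *\<^sub>v vec n f = 0\<^sub>v n"
    by (simp add: assoc_mult_mat_vec[OF mult_carrier_mat[OF X_minus_carrier X_minus_carrier]
        h_factor_prod_carrier] assoc_mult_mat_vec[OF X_minus_carrier X_minus_carrier]
        h_factor_prod_mult_vec X_minus_mult_vec zero_vec_def)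
qed

lemma Xmat_invertible: "invertible_mat (Xmat D q e)"
proof -
  define B where "B = mat n n (\<lambda>(i, j). X_op_inv (\<lambda>k. if k = j then 1 else 0) i)"
  have B: "B \<in> carrier_mat n n" by (simp add: B_def)
  have XB: "Xmat D q e * B = 1\<^sub>m n"
  proof (rule eq_matI)
    fix i j assume "i < dim_row (1\<^sub>m n :: complex mat)" "j < dim_col (1\<^sub>m n :: complex mat)"
    then have i: "i < n" and j: "j < n" by auto
    have "col B j = vec n (X_op_inv (\<lambda>k. if k = j then 1 else 0))" using j by (simp add: B_def)
    then have "(Xmat D q e * B) $$ (i, j) = (Xmat D q e *\<^sub>v vec n (X_op_inv (\<lambda>k. if k = j then 1 else 0))) $ i"
      using i j B Xmat_carrier by simp
    then show "(Xmat D q e * B) $$ (i, j) = 1\<^sub>m n $$ (i, j)"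
      using i j by (simp add: Xmat_mult_vec X_op_inv_right)
  qed (use B Xmat_carrier in auto)
  then have "B * Xmat D q e = 1\<^sub>m n" by (rule mat_mult_left_right_inverse[OF Xmat_carrier B])
  with XB B Xmat_carrier show ?thesis
    unfolding invertible_mat_def inverts_mat_def by (auto intro!: exI[of _ B])
qed

lemma X_minus_mult_commute_left_inverse:
  assumes "Y \<in> carrier_mat n n" "Y * Xmat D q e = 1\<^sub>m n"
  shows "(X_minus c * X_minus d) * Y = Y * (X_minus c * X_minus d)"
  using assms X_minus_carrier Xmat_carrier
  by (intro mult_commute_mult_mat) (auto simp: X_minus_def minus_smult_one_commute_left_inverse)

lemma p_perp_h_perp_eq:
  "p_perp D q e Y (Xmat D q e) * h_perp D q e Y (Xmat D q e)
    = (Y * (X_minus (root_up 0) * X_minus (root_down D))) * (Y ^\<^sub>m (D - 1) * h_factor_prod [1..<D])"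
  using q_pos by (simp add: p_perp_def h_perp_def dim_row_Xmat X_minus_def h_factor_prod_def
      root_up_def root_down_def qp_zero)

end

theorem lemma9p4:
  fixes D q :: nat and e :: real
  assumes "prime_power q"
    and "D \<ge> 3"
    and "e \<in> {0, 1/2, 1, 3/2, 2}"
    and "e \<in> {1/2, 3/2} \<Longrightarrow> \<exists>r. q = r ^ 2"
  shows "invertible_mat (Xmat D q e) \<and>
    (\<forall>Y \<in> carrier_mat (2 * D) (2 * D).
       Y * Xmat D q e = 1\<^sub>m (2 * D) \<longrightarrow>
       p_perp D q e Y (Xmat D q e) * h_perp D q e Y (Xmat D q e) = 0\<^sub>m (2 * D) (2 * D))"
proof -
  obtain p k where "prime p" "k > 0" "q = p ^ k"
    using assms(1) unfolding prime_power_def by blast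
  then have "q > 1" using prime_gt_1_nat one_less_power by blast
  then interpret dual_polar_params D q e
    using assms(2) by unfold_locales auto
  show ?thesis
  proof (intro conjI ballI impI)
    fix Y assume Y: "Y \<in> carrier_mat n n" and YX: "Y * Xmat D q e = 1\<^sub>m n"
    show "p_perp D q e Y (Xmat D q e) * h_perp D q e Y (Xmat D q e) = 0\<^sub>m n n"
      unfolding p_perp_h_perp_eq
      by (rule mult_pow_mult_zero[OF Y mult_carrier_mat[OF X_minus_carrier X_minus_carrier]
            h_factor_prod_carrier X_minus_mult_commute_left_inverse[OF Y YX] annihilator_eq_zero])
  qed (rule Xmat_invertible)
qed

end
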